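(* Let $A$ be a commutative noetherian local ring and let $x,y\in A$ be a regular exact pair of zero divisors. Let $a\in A$ be weakly regular on the $A$-module $A/(x,y)$, and let $b\in A$ be any element. Then there are $A$-module isomorphisms (a) $\operatorname{Hom}_A(H_a,H_{ab})\cong\operatorname{Hom}_A(G_{ab},G_a)\cong H_b$, and (b) $\operatorname{Hom}_A(G_a,G_{ab})\cong\operatorname{Hom}_A(H_{ab},H_a)\cong G_b$.
   Context: Two non-units $x,y\in A$ form an exact pair of zero divisors if $\operatorname{Ann}_A(x)=(y)$ and $\operatorname{Ann}_A(y)=(x)$; such a pair is regular if $(x)\cap(y)=0$. An element $a\in A$ is weakly regular on a module $M$ if multiplication by $a$ on $M$ is injective. For $a\in A$, let $\gamma_a=\begin{pmatrix} x & a\\ 0 & y\end{pmatrix}$ and $\eta_a=\begin{pmatrix} y & -a\\ 0 & x\end{pmatrix}$, viewed as $A$-linear maps $A^2\to A^2$ acting on column vectors, and set $G_a=\operatorname{Coker}\gamma_a$, $H_a=\operatorname{Coker}\eta_a$. *)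

theory Defs
  imports Main
begin

definition is_ideal :: "'a::comm_ring_1 set \<Rightarrow> bool" where
  "is_ideal I \<longleftrightarrow> 0 \<in> I \<and> (\<forall>u\<in>I. \<forall>v\<in>I. u + v \<in> I) \<and> (\<forall>r. \<forall>u\<in>I. r * u \<in> I)"

definition ideal_span :: "'a::comm_ring_1 set \<Rightarrow> 'a set" where
  "ideal_span F = {\<Sum>f\<in>F. c f * f | c. True}"

definition noetherian_ring :: "'a::comm_ring_1 itself \<Rightarrow> bool" where
  "noetherian_ring _ \<longleftrightarrow>
     (\<forall>I::'a set. is_ideal I \<longrightarrow> (\<exists>F. finite F \<and> F \<subseteq> I \<and> I = ideal_span F))"

definition maximal_ideal :: "'a::comm_ring_1 set \<Rightarrow> bool" where
  "maximal_ideal m \<longleftrightarrow> is_ideal m \<and> m \<noteq> UNIV \<and>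
     (\<forall>J. is_ideal J \<and> m \<subseteq> J \<and> J \<noteq> UNIV \<longrightarrow> J = m)"

definition local_ring :: "'a::comm_ring_1 itself \<Rightarrow> bool" where
  "local_ring _ \<longleftrightarrow> (\<exists>!m::'a set. maximal_ideal m)"

definition is_unit :: "'a::comm_ring_1 \<Rightarrow> bool" where
  "is_unit u \<longleftrightarrow> u dvd 1"

definition principal :: "'a::comm_ring_1 \<Rightarrow> 'a set" where
  "principal x = {r * x | r. True}"

definition Ann :: "'a::comm_ring_1 \<Rightarrow> 'a set" where
  "Ann x = {r. r * x = 0}"

definition exact_pair :: "'a::comm_ring_1 \<Rightarrow> 'a \<Rightarrow> bool" where
  "exact_pair x y \<longleftrightarrow> \<not> is_unit x \<and> \<not> is_unit y \<and> Ann x = principal y \<and> Ann y = principal x"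

definition regular_exact_pair :: "'a::comm_ring_1 \<Rightarrow> 'a \<Rightarrow> bool" where
  "regular_exact_pair x y \<longleftrightarrow> exact_pair x y \<and> principal x \<inter> principal y = {0}"

record ('a, 'm) amod =
  mcarrier :: "'m set"
  madd :: "'m \<Rightarrow> 'm \<Rightarrow> 'm"
  mzero :: "'m"
  msmul :: "'a \<Rightarrow> 'm \<Rightarrow> 'm"

definition mod_iso :: "('a, 'm) amod \<Rightarrow> ('a, 'n) amod \<Rightarrow> bool" where
  "mod_iso M N \<longleftrightarrow> (\<exists>f. bij_betw f (mcarrier M) (mcarrier N) \<and>
     (\<forall>u\<in>mcarrier M. \<forall>v\<in>mcarrier M. f (madd M u v) = madd N (f u) (f v)) \<and>
     (\<forall>r. \<forall>u\<in>mcarrier M. f (msmul M r u) = msmul N r (f u)))"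

definition mod_linear :: "('a, 'm) amod \<Rightarrow> ('a, 'n) amod \<Rightarrow> ('m \<Rightarrow> 'n) \<Rightarrow> bool" where
  "mod_linear M N f \<longleftrightarrow> (\<forall>u\<in>mcarrier M. f u \<in> mcarrier N) \<and>
     (\<forall>u\<in>mcarrier M. \<forall>v\<in>mcarrier M. f (madd M u v) = madd N (f u) (f v)) \<and>
     (\<forall>r. \<forall>u\<in>mcarrier M. f (msmul M r u) = msmul N r (f u))"

definition Hom_mod :: "('a::comm_ring_1, 'm) amod \<Rightarrow> ('a, 'n) amod \<Rightarrow> ('a, 'm \<Rightarrow> 'n) amod" where
  "Hom_mod M N = \<lparr> mcarrier = {f. mod_linear M N f \<and> (\<forall>u. u \<notin> mcarrier M \<longrightarrow> f u = undefined)},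
     madd = (\<lambda>f g u. if u \<in> mcarrier M then madd N (f u) (g u) else undefined),
     mzero = (\<lambda>u. if u \<in> mcarrier M then mzero N else undefined),
     msmul = (\<lambda>r f u. if u \<in> mcarrier M then msmul N r (f u) else undefined) \<rparr>"

definition quot_mod :: "('a, 'm) amod \<Rightarrow> 'm set \<Rightarrow> ('a, 'm set) amod" where
  "quot_mod M S = \<lparr> mcarrier = {{madd M v s | s. s \<in> S} | v. v \<in> mcarrier M},
     madd = (\<lambda>C D. {madd M c d | c d. c \<in> C \<and> d \<in> D}),
     mzero = S,
     msmul = (\<lambda>r C. {madd M (msmul M r c) s | c s. c \<in> C \<and> s \<in> S}) \<rparr>"

definition ring_mod :: "('a::comm_ring_1, 'a) amod" where
  "ring_mod = \<lparr> mcarrier = UNIV, madd = (+), mzero = 0, msmul = (*) \<rparr>"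

definition free2 :: "('a::comm_ring_1, 'a \<times> 'a) amod" where
  "free2 = \<lparr> mcarrier = UNIV, madd = (\<lambda>(u1, u2) (v1, v2). (u1 + v1, u2 + v2)), mzero = (0, 0),
     msmul = (\<lambda>r (u1, u2). (r * u1, r * u2)) \<rparr>"

definition weakly_regular :: "'a \<Rightarrow> ('a, 'm) amod \<Rightarrow> bool" where
  "weakly_regular a M \<longleftrightarrow> inj_on (msmul M a) (mcarrier M)"

definition quot_xy :: "'a::comm_ring_1 \<Rightarrow> 'a \<Rightarrow> ('a, 'a set) amod" where
  "quot_xy x y = quot_mod ring_mod (ideal_span {x, y})"

text \<open>gamma_a = [[x, a],[0, y]], eta_a = [[y, -a],[0, x]] acting on column vectors.\<close>
definition gamma_map :: "'a::comm_ring_1 \<Rightarrow> 'a \<Rightarrow> 'a \<Rightarrow> 'a \<times> 'a \<Rightarrow> 'a \<times> 'a" where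
  "gamma_map x y a = (\<lambda>(s, t). (x * s + a * t, 0 * s + y * t))"

definition eta_map :: "'a::comm_ring_1 \<Rightarrow> 'a \<Rightarrow> 'a \<Rightarrow> 'a \<times> 'a \<Rightarrow> 'a \<times> 'a" where
  "eta_map x y a = (\<lambda>(s, t). (y * s + (- a) * t, 0 * s + x * t))"

definition G_mod :: "'a::comm_ring_1 \<Rightarrow> 'a \<Rightarrow> 'a \<Rightarrow> ('a, ('a \<times> 'a) set) amod" where
  "G_mod x y a = quot_mod free2 (range (gamma_map x y a))"

definition H_mod :: "'a::comm_ring_1 \<Rightarrow> 'a \<Rightarrow> 'a \<Rightarrow> ('a, ('a \<times> 'a) set) amod" where
  "H_mod x y a = quot_mod free2 (range (eta_map x y a))"

end

theory Submission
  imports Defs HOL.Modules "HOL-Library.Product_Plus"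
begin

text \<open>A homomorphism \<open>A\<^sup>2/S \<rightarrow> A\<^sup>2/T\<close> is induced by a matrix \<open>[P R]\<close> with
  \<open>[P R] S \<subseteq> T\<close>, and two such matrices induce the same map iff their columns agree
  modulo \<open>T\<close>. For \<open>S = im \<gamma>\<^sub>c\<close>, generated by \<open>(x, 0)\<close> and \<open>(c, y)\<close>, the
  condition reads \<open>x P \<in> T\<close> and \<open>c P + y R \<in> T\<close>. For \<open>Hom(G\<^sub>a\<^sub>b, G\<^sub>a)\<close> and
  \<open>Hom(G\<^sub>a, G\<^sub>a\<^sub>b)\<close> one writes down linear families of such matrices parametrised by
  \<open>(u, v) \<in> A\<^sup>2\<close>: exactness of \<open>x, y\<close> identifies the parameters of the zero map with
  \<open>im \<eta>\<^sub>b\<close> resp. \<open>im \<gamma>\<^sub>b\<close>, and weak regularity of \<open>a\<close> on \<open>A/(x, y)\<close> shows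
  that every homomorphism occurs. Since \<open>H\<^sub>c\<close> for \<open>(x, y)\<close> is \<open>G\<^sub>-\<^sub>c\<close> for
  \<open>(y, x)\<close> and \<open>G\<^sub>-\<^sub>c \<cong> G\<^sub>c\<close> via \<open>(s, t) \<mapsto> (s, -t)\<close>, the remaining
  isomorphisms follow by exchanging \<open>x\<close> with \<open>y\<close> and \<open>a\<close> with \<open>-a\<close>.\<close>

section \<open>Isomorphisms and quotients of modules\<close>

lemma mod_iso_trans:
  assumes "mod_iso M N" and "mod_iso N K"
  shows "mod_iso M K"
proof -
  obtain f where f: "bij_betw f (mcarrier M) (mcarrier N)"
    "\<forall>u\<in>mcarrier M. \<forall>v\<in>mcarrier M. f (madd M u v) = madd N (f u) (f v)"
    "\<forall>r. \<forall>u\<in>mcarrier M. f (msmul M r u) = msmul N r (f u)"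
    using assms(1) unfolding mod_iso_def by blast
  obtain h where h: "bij_betw h (mcarrier N) (mcarrier K)"
    "\<forall>u\<in>mcarrier N. \<forall>v\<in>mcarrier N. h (madd N u v) = madd K (h u) (h v)"
    "\<forall>r. \<forall>u\<in>mcarrier N. h (msmul N r u) = msmul K r (h u)"
    using assms(2) unfolding mod_iso_def by blast
  have "u \<in> mcarrier M \<Longrightarrow> f u \<in> mcarrier N" for u
    using f(1) bij_betwE by blast
  then show ?thesis
    unfolding mod_iso_def using bij_betw_trans[OF f(1) h(1)] f(2,3) h(2,3)
    by (intro exI[of _ "h \<circ> f"]) auto
qed

(* Records of type amod obey no closure axioms; closure of M makes the inverse of f linear. *)
lemma mod_iso_sym:
  assumes iso: "mod_iso M N"
    and add_closed: "\<And>u v. u \<in> mcarrier M \<Longrightarrow> v \<in> mcarrier M \<Longrightarrow> madd M u v \<in> mcarrier M"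
    and smul_closed: "\<And>r u. u \<in> mcarrier M \<Longrightarrow> msmul M r u \<in> mcarrier M"
  shows "mod_iso N M"
proof -
  obtain f where f: "bij_betw f (mcarrier M) (mcarrier N)"
    and f_add: "\<forall>u\<in>mcarrier M. \<forall>v\<in>mcarrier M. f (madd M u v) = madd N (f u) (f v)"
    and f_smul: "\<forall>r. \<forall>u\<in>mcarrier M. f (msmul M r u) = msmul N r (f u)"
    using iso unfolding mod_iso_def by blast
  define g where "g = the_inv_into (mcarrier M) f"
  have g_f: "g (f u) = u" if "u \<in> mcarrier M" for u
    using f that by (simp add: g_def the_inv_into_f_f bij_betw_def)
  have onto: "mcarrier N = f ` mcarrier M"
    using f by (simp add: bij_betw_def)
  show ?thesis
    unfolding mod_iso_def
  proof (intro exI conjI ballI allI)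
    show "bij_betw g (mcarrier N) (mcarrier M)"
      unfolding g_def by (rule bij_betw_the_inv_into[OF f])
    show "g (madd N u v) = madd M (g u) (g v)" if "u \<in> mcarrier N" "v \<in> mcarrier N" for u v
      using that by (auto simp: onto g_f add_closed simp flip: f_add)
    show "g (msmul N r u) = msmul M r (g u)" if "u \<in> mcarrier N" for r u
      using that by (auto simp: onto g_f smul_closed simp flip: f_smul)
  qed
qed

definition coset :: "'b::ab_group_add set \<Rightarrow> 'b \<Rightarrow> 'b set" where
  "coset S v = {v + s |s. s \<in> S}"

lemma mem_coset: "w \<in> coset S v \<longleftrightarrow> w - v \<in> S"
  by (force simp: coset_def)

context module
begin

definition as_amod :: "('a, 'b) amod" where
  "as_amod = \<lparr>mcarrier = UNIV, madd = (+), mzero = 0, msmul = scale\<rparr>"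

lemma coset_eq_iff:
  assumes S: "subspace S"
  shows "coset S v = coset S w \<longleftrightarrow> v - w \<in> S"
proof
  assume "coset S v = coset S w"
  moreover have "v \<in> coset S v"
    by (simp add: mem_coset subspace_0[OF S])
  ultimately show "v - w \<in> S"
    by (simp add: mem_coset)
next
  assume vw: "v - w \<in> S"
  have "z - v \<in> S \<longleftrightarrow> z - w \<in> S" for z
  proof
    assume "z - v \<in> S"
    then have "(z - v) + (v - w) \<in> S" using vw S subspace_add by blast
    then show "z - w \<in> S" by simp
  next
    assume "z - w \<in> S"
    then have "(z - w) - (v - w) \<in> S" using vw S subspace_diff by blast
    then show "z - v \<in> S" by simp
  qed
  then show "coset S v = coset S w"
    by (auto simp: mem_coset)
qed

lemma mcarrier_quot_mod: "mcarrier (quot_mod as_amod S) = range (coset S)"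
  by (auto simp: quot_mod_def as_amod_def coset_def)

lemma madd_quot_mod_coset:
  assumes S: "subspace S"
  shows "madd (quot_mod as_amod S) (coset S v) (coset S w) = coset S (v + w)"
proof -
  have "(\<exists>c d. z = c + d \<and> c - v \<in> S \<and> d - w \<in> S) \<longleftrightarrow> z - (v + w) \<in> S" for z
  proof
    assume "\<exists>c d. z = c + d \<and> c - v \<in> S \<and> d - w \<in> S"
    then obtain c d where "z = c + d" "c - v \<in> S" "d - w \<in> S" by blast
    moreover have "(c - v) + (d - w) \<in> S" using calculation(2,3) S subspace_add by blast
    ultimately show "z - (v + w) \<in> S" by (simp add: algebra_simps)
  next
    assume "z - (v + w) \<in> S"
    then show "\<exists>c d. z = c + d \<and> c - v \<in> S \<and> d - w \<in> S"
      by (intro exI[of _ "z - w"] exI[of _ w]) (simp add: subspace_0[OF S] algebra_simps)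
  qed
  then show ?thesis
    by (auto simp: quot_mod_def as_amod_def mem_coset)
qed

lemma msmul_quot_mod_coset:
  assumes S: "subspace S"
  shows "msmul (quot_mod as_amod S) r (coset S v) = coset S (r *s v)"
proof -
  have "(\<exists>c s. z = r *s c + s \<and> c - v \<in> S \<and> s \<in> S) \<longleftrightarrow> z - r *s v \<in> S" for z
  proof
    assume "\<exists>c s. z = r *s c + s \<and> c - v \<in> S \<and> s \<in> S"
    then obtain c s where "z = r *s c + s" "c - v \<in> S" "s \<in> S" by blast
    moreover have "r *s (c - v) + s \<in> S" using calculation(2,3) S subspace_add subspace_scale by blast
    ultimately show "z - r *s v \<in> S" by (simp add: algebra_simps)
  next
    assume "z - r *s v \<in> S"
    then show "\<exists>c s. z = r *s c + s \<and> c - v \<in> S \<and> s \<in> S"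
      by (intro exI[of _ v] exI[of _ "z - r *s v"]) (simp add: subspace_0[OF S])
  qed
  then show ?thesis
    by (auto simp: quot_mod_def as_amod_def mem_coset)
qed

lemma weakly_regular_quot_modD:
  assumes S: "subspace S"
    and "weakly_regular a (quot_mod as_amod S)" and "a *s v \<in> S"
  shows "v \<in> S"
proof -
  have "msmul (quot_mod as_amod S) a (coset S v) = msmul (quot_mod as_amod S) a (coset S 0)"
    using assms(3) by (simp add: msmul_quot_mod_coset[OF S] coset_eq_iff[OF S])
  then have "coset S v = coset S 0"
    using assms(2) by (auto simp: weakly_regular_def mcarrier_quot_mod dest: inj_onD)
  then show ?thesis
    by (simp add: coset_eq_iff[OF S])
qed

lemma mod_iso_quot_modI:
  assumes S: "subspace S"
    and add: "\<And>v w. g (v + w) = madd N (g v) (g w)"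
    and scale: "\<And>r v. g (r *s v) = msmul N r (g v)"
    and onto: "mcarrier N = range g"
    and ker: "\<And>v w. g v = g w \<longleftrightarrow> v - w \<in> S"
  shows "mod_iso (quot_mod as_amod S) N"
proof -
  define f where "f D = g (SOME v. v \<in> D)" for D
  have f_coset: "f (coset S v) = g v" for v
  proof -
    have "(SOME w. w \<in> coset S v) \<in> coset S v"
      by (rule someI[of _ v]) (simp add: mem_coset subspace_0[OF S])
    then show ?thesis
      by (simp add: f_def mem_coset ker)
  qed
  show ?thesis
    unfolding mod_iso_def
  proof (intro exI conjI ballI allI)
    show "bij_betw f (mcarrier (quot_mod as_amod S)) (mcarrier N)"
      by (auto simp: bij_betw_def inj_on_def mcarrier_quot_mod onto f_coset ker
          coset_eq_iff[OF S] image_image)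
    show "f (madd (quot_mod as_amod S) C D) = madd N (f C) (f D)"
      if "C \<in> mcarrier (quot_mod as_amod S)" "D \<in> mcarrier (quot_mod as_amod S)" for C D
      using that by (auto simp: mcarrier_quot_mod madd_quot_mod_coset[OF S] f_coset add)
    show "f (msmul (quot_mod as_amod S) r C) = msmul N r (f C)"
      if "C \<in> mcarrier (quot_mod as_amod S)" for r C
      using that by (auto simp: mcarrier_quot_mod msmul_quot_mod_coset[OF S] f_coset scale)
  qed
qed

lemma mod_iso_quot_mod_sym:
  assumes "subspace S" and "mod_iso (quot_mod as_amod S) N"
  shows "mod_iso N (quot_mod as_amod S)"
  using assms(2) by (rule mod_iso_sym)
    (auto simp: mcarrier_quot_mod madd_quot_mod_coset[OF assms(1)] msmul_quot_mod_coset[OF assms(1)])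

end

lemma module_mult: "module ((*) :: 'a::comm_ring_1 \<Rightarrow> 'a \<Rightarrow> 'a)"
  by standard (simp_all add: algebra_simps)

lemma ring_mod_eq: "ring_mod = module.as_amod (*)"
  by (simp add: ring_mod_def module.as_amod_def[OF module_mult])

lemma subspace_ideal_span: "module.subspace (*) (ideal_span F)"
  unfolding module.subspace_def[OF module_mult] ideal_span_def
proof (intro conjI ballI allI)
  show "0 \<in> {\<Sum>f\<in>F. c f * f |c. True}"
    by (auto intro!: exI[of _ "\<lambda>_. 0"])
next
  fix u v assume "u \<in> {\<Sum>f\<in>F. c f * f |c. True}" "v \<in> {\<Sum>f\<in>F. c f * f |c. True}"
  then obtain c d where "u = (\<Sum>f\<in>F. c f * f)" "v = (\<Sum>f\<in>F. d f * f)" by blast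
  then have "u + v = (\<Sum>f\<in>F. (c f + d f) * f)"
    by (simp add: sum.distrib distrib_right)
  then show "u + v \<in> {\<Sum>f\<in>F. c f * f |c. True}"
    by (auto intro!: exI[of _ "\<lambda>f. c f + d f"])
next
  fix r u assume "u \<in> {\<Sum>f\<in>F. c f * f |c. True}"
  then obtain c where "u = (\<Sum>f\<in>F. c f * f)" by blast
  then have "r * u = (\<Sum>f\<in>F. (r * c f) * f)"
    by (simp add: sum_distrib_left mult.assoc)
  then show "r * u \<in> {\<Sum>f\<in>F. c f * f |c. True}"
    by (auto intro!: exI[of _ "\<lambda>f. r * c f"])
qed

lemma mem_ideal_span_pair: "z \<in> ideal_span {x, y} \<longleftrightarrow> (\<exists>m n. z = x * m + y * n)"
proof
  assume "z \<in> ideal_span {x, y}"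
  then obtain c where "z = (\<Sum>f\<in>{x, y}. c f * f)"
    by (auto simp: ideal_span_def)
  then have "z = x * c x + y * (if x = y then 0 else c y)"
    by (cases "x = y") (simp_all add: mult.commute)
  then show "\<exists>m n. z = x * m + y * n" by blast
next
  assume "\<exists>m n. z = x * m + y * n"
  then obtain m n where z: "z = x * m + y * n" by blast
  define c where "c f = (if f = x then m + (if x = y then n else 0) else n)" for f
  have "z = (\<Sum>f\<in>{x, y}. c f * f)"
    by (cases "x = y") (simp_all add: z c_def algebra_simps)
  then show "z \<in> ideal_span {x, y}"
    by (auto simp: ideal_span_def)
qed

lemma weakly_regular_quot_xyD:
  assumes "weakly_regular a (quot_xy x y)" and "a * r \<in> ideal_span {x, y}"
  shows "r \<in> ideal_span {x, y}"
  using module.weakly_regular_quot_modD[OF module_mult subspace_ideal_span] assms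
  by (simp add: quot_xy_def ring_mod_eq)

section \<open>Homomorphisms between quotients of \<open>A\<^sup>2\<close>\<close>

definition pair_scale :: "'a::comm_ring_1 \<Rightarrow> 'a \<times> 'a \<Rightarrow> 'a \<times> 'a" where
  "pair_scale r p = (r * fst p, r * snd p)"

lemma pair_scale_Pair [simp]: "pair_scale r (u, v) = (r * u, r * v)"
  by (simp add: pair_scale_def)

lemma module_pair_scale: "module pair_scale"
  by standard (simp_all add: pair_scale_def prod_eq_iff algebra_simps)

interpretation pair: module pair_scale
  by (rule module_pair_scale)

lemma free2_eq: "free2 = pair.as_amod"
  by (simp add: free2_def pair.as_amod_def pair_scale_def fun_eq_iff prod_eq_iff)

abbreviation pair_quot :: "('a::comm_ring_1 \<times> 'a) set \<Rightarrow> ('a, ('a \<times> 'a) set) amod" where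
  "pair_quot S \<equiv> quot_mod pair.as_amod S"

definition matrix_map :: "'a::comm_ring_1 \<times> 'a \<Rightarrow> 'a \<times> 'a \<Rightarrow> 'a \<times> 'a \<Rightarrow> 'a \<times> 'a" where
  "matrix_map P R d = pair_scale (fst d) P + pair_scale (snd d) R"

interpretation matrix_map: module_hom pair_scale pair_scale "matrix_map P R" for P R
  by (simp add: module_hom_iff module_pair_scale matrix_map_def pair_scale_def algebra_simps)

lemma matrix_map_basis [simp]: "matrix_map P R (1, 0) = P" "matrix_map P R (0, 1) = R"
  by (simp_all add: matrix_map_def pair_scale_def zero_prod_def)

lemma matrix_map_add_columns:
  "matrix_map (P + P') (R + R') d = matrix_map P R d + matrix_map P' R' d"
  by (simp add: matrix_map_def pair_scale_def algebra_simps)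

lemma matrix_map_diff_columns:
  "matrix_map P R d - matrix_map P' R' d = matrix_map (P - P') (R - R') d"
  by (simp add: matrix_map_def pair_scale_def algebra_simps)

lemma matrix_map_scale_columns:
  "matrix_map (pair_scale r P) (pair_scale r R) d = pair_scale r (matrix_map P R d)"
  by (simp add: matrix_map_def pair_scale_def algebra_simps)

lemma matrix_map_mem_subspace:
  "pair.subspace T \<Longrightarrow> P \<in> T \<Longrightarrow> R \<in> T \<Longrightarrow> matrix_map P R d \<in> T"
  by (simp add: matrix_map_def pair.subspace_add pair.subspace_scale)

lemma subspace_range_matrix_map: "pair.subspace (range (matrix_map U V))"
  by (rule matrix_map.subspace_image) simp

lemma matrix_map_image_range_subset_iff:
  assumes T: "pair.subspace T"
  shows "matrix_map P R ` range (matrix_map U V) \<subseteq> T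
     \<longleftrightarrow> matrix_map P R U \<in> T \<and> matrix_map P R V \<in> T"
proof
  assume "matrix_map P R ` range (matrix_map U V) \<subseteq> T"
  then show "matrix_map P R U \<in> T \<and> matrix_map P R V \<in> T"
    using rangeI[of "matrix_map U V" "(1, 0)"] rangeI[of "matrix_map U V" "(0, 1)"] by auto
next
  assume PR: "matrix_map P R U \<in> T \<and> matrix_map P R V \<in> T"
  show "matrix_map P R ` range (matrix_map U V) \<subseteq> T"
  proof (rule image_subsetI)
    fix d assume "d \<in> range (matrix_map U V)"
    then obtain w where "d = matrix_map U V w" by blast
    moreover have "matrix_map P R (matrix_map U V w)
        = matrix_map (matrix_map P R U) (matrix_map P R V) w"
      by (simp add: matrix_map_def pair_scale_def prod_eq_iff algebra_simps)
    ultimately show "matrix_map P R d \<in> T"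
      using PR matrix_map_mem_subspace[OF T] by simp
  qed
qed

(* The junk value undefined off the carrier is what Hom_mod requires of its elements. *)
definition quot_map :: "('a::comm_ring_1 \<times> 'a) set \<Rightarrow> ('a \<times> 'a) set \<Rightarrow> ('a \<times> 'a \<Rightarrow> 'a \<times> 'a)
    \<Rightarrow> ('a \<times> 'a) set \<Rightarrow> ('a \<times> 'a) set" where
  "quot_map S T L D = (if D \<in> range (coset S) then coset T (L (SOME d. d \<in> D)) else undefined)"

lemma quot_map_coset:
  assumes S: "pair.subspace S" and T: "pair.subspace T" and ST: "matrix_map P R ` S \<subseteq> T"
  shows "quot_map S T (matrix_map P R) (coset S d) = coset T (matrix_map P R d)"
proof -
  have "(SOME e. e \<in> coset S d) \<in> coset S d"
    by (rule someI[of _ d]) (simp add: mem_coset pair.subspace_0[OF S])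
  then have "matrix_map P R (SOME e. e \<in> coset S d) - matrix_map P R d \<in> T"
    using ST by (auto simp: mem_coset simp flip: matrix_map.diff)
  then show ?thesis
    by (simp add: quot_map_def pair.coset_eq_iff[OF T])
qed

lemma quot_map_in_Hom:
  assumes S: "pair.subspace S" and T: "pair.subspace T" and ST: "matrix_map P R ` S \<subseteq> T"
  shows "quot_map S T (matrix_map P R) \<in> mcarrier (Hom_mod (pair_quot S) (pair_quot T))"
proof -
  note map_coset = quot_map_coset[OF S T ST]
  have "mod_linear (pair_quot S) (pair_quot T) (quot_map S T (matrix_map P R))"
    unfolding mod_linear_def pair.mcarrier_quot_mod
    by (auto simp: map_coset pair.madd_quot_mod_coset[OF S] pair.madd_quot_mod_coset[OF T]
        pair.msmul_quot_mod_coset[OF S] pair.msmul_quot_mod_coset[OF T]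
        matrix_map.add matrix_map.scale simp del: pair_scale_Pair)
  then show ?thesis
    by (simp add: Hom_mod_def quot_map_def pair.mcarrier_quot_mod)
qed

lemma madd_Hom_quot_map:
  assumes T: "pair.subspace T"
  shows "madd (Hom_mod (pair_quot S) (pair_quot T)) (quot_map S T (matrix_map P R))
      (quot_map S T (matrix_map P' R')) = quot_map S T (matrix_map (P + P') (R + R'))"
  by (simp add: fun_eq_iff Hom_mod_def quot_map_def pair.mcarrier_quot_mod
      pair.madd_quot_mod_coset[OF T] matrix_map_add_columns)

lemma msmul_Hom_quot_map:
  assumes T: "pair.subspace T"
  shows "msmul (Hom_mod (pair_quot S) (pair_quot T)) r (quot_map S T (matrix_map P R))
      = quot_map S T (matrix_map (pair_scale r P) (pair_scale r R))"
  by (simp add: fun_eq_iff Hom_mod_def quot_map_def pair.mcarrier_quot_mod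
      pair.msmul_quot_mod_coset[OF T] matrix_map_scale_columns)

lemma quot_map_eq_iff:
  assumes S: "pair.subspace S" and T: "pair.subspace T"
    and ST: "matrix_map P R ` S \<subseteq> T" and ST': "matrix_map P' R' ` S \<subseteq> T"
  shows "quot_map S T (matrix_map P R) = quot_map S T (matrix_map P' R')
     \<longleftrightarrow> P - P' \<in> T \<and> R - R' \<in> T"
proof
  assume eq: "quot_map S T (matrix_map P R) = quot_map S T (matrix_map P' R')"
  have "coset T (matrix_map P R d) = coset T (matrix_map P' R' d)" for d
    using eq quot_map_coset[OF S T ST, of d] quot_map_coset[OF S T ST', of d] by simp
  from this[of "(1, 0)"] this[of "(0, 1)"] show "P - P' \<in> T \<and> R - R' \<in> T"
    by (simp add: pair.coset_eq_iff[OF T])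
next
  assume "P - P' \<in> T \<and> R - R' \<in> T"
  then have "matrix_map P R d - matrix_map P' R' d \<in> T" for d
    by (simp add: matrix_map_diff_columns matrix_map_mem_subspace[OF T])
  then show "quot_map S T (matrix_map P R) = quot_map S T (matrix_map P' R')"
    by (simp add: fun_eq_iff quot_map_def pair.coset_eq_iff[OF T])
qed

lemma mod_linear_pair_quotE:
  assumes S: "pair.subspace S" and T: "pair.subspace T"
    and lin: "mod_linear (pair_quot S) (pair_quot T) \<phi>"
  obtains P R where "\<And>d. \<phi> (coset S d) = coset T (matrix_map P R d)"
proof -
  have into: "\<phi> (coset S d) \<in> range (coset T)" for d
    using lin unfolding mod_linear_def pair.mcarrier_quot_mod by blast
  obtain P R where P: "\<phi> (coset S (1, 0)) = coset T P" and R: "\<phi> (coset S (0, 1)) = coset T R"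
    using into[of "(1, 0)"] into[of "(0, 1)"] by blast
  have \<phi>_add: "\<phi> (coset S (v + w)) = madd (pair_quot T) (\<phi> (coset S v)) (\<phi> (coset S w))" for v w
    using lin unfolding mod_linear_def pair.mcarrier_quot_mod
    by (metis rangeI pair.madd_quot_mod_coset[OF S])
  have \<phi>_scale: "\<phi> (coset S (pair_scale r v)) = msmul (pair_quot T) r (\<phi> (coset S v))" for r v
    using lin unfolding mod_linear_def pair.mcarrier_quot_mod
    by (metis rangeI pair.msmul_quot_mod_coset[OF S])
  have "\<phi> (coset S d) = coset T (matrix_map P R d)" for d
  proof -
    have "d = pair_scale (fst d) (1, 0) + pair_scale (snd d) (0, 1)"
      by (simp add: prod_eq_iff)
    then have "\<phi> (coset S d) = \<phi> (coset S (pair_scale (fst d) (1, 0) + pair_scale (snd d) (0, 1)))"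
      by (rule arg_cong)
    also have "\<dots> = madd (pair_quot T) (msmul (pair_quot T) (fst d) (coset T P))
        (msmul (pair_quot T) (snd d) (coset T R))"
      by (simp only: \<phi>_add \<phi>_scale P R)
    also have "\<dots> = coset T (matrix_map P R d)"
      by (simp add: pair.madd_quot_mod_coset[OF T] pair.msmul_quot_mod_coset[OF T] matrix_map_def)
    finally show ?thesis .
  qed
  then show ?thesis
    by (rule that)
qed

lemma Hom_pair_quotE:
  assumes S: "pair.subspace S" and T: "pair.subspace T"
    and \<phi>: "\<phi> \<in> mcarrier (Hom_mod (pair_quot S) (pair_quot T))"
  obtains P R where "matrix_map P R ` S \<subseteq> T" and "\<phi> = quot_map S T (matrix_map P R)"
proof -
  have lin: "mod_linear (pair_quot S) (pair_quot T) \<phi>"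
    and undef: "\<And>D. D \<notin> range (coset S) \<Longrightarrow> \<phi> D = undefined"
    using \<phi> by (auto simp: Hom_mod_def pair.mcarrier_quot_mod)
  obtain P R where \<phi>_coset: "\<And>d. \<phi> (coset S d) = coset T (matrix_map P R d)"
    using mod_linear_pair_quotE[OF S T lin] by blast
  have ST: "matrix_map P R ` S \<subseteq> T"
  proof (rule image_subsetI)
    fix s assume "s \<in> S"
    then have "coset S s = coset S 0"
      by (simp add: pair.coset_eq_iff[OF S])
    then have "coset T (matrix_map P R s) = coset T 0"
      by (metis \<phi>_coset matrix_map.zero)
    then show "matrix_map P R s \<in> T"
      by (simp add: pair.coset_eq_iff[OF T])
  qed
  moreover have "\<phi> = quot_map S T (matrix_map P R)"
  proof
    fix D
    show "\<phi> D = quot_map S T (matrix_map P R) D"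
    proof (cases "D \<in> range (coset S)")
      case True
      then show ?thesis
        by (auto simp: \<phi>_coset quot_map_coset[OF S T ST])
    next
      case False
      then show ?thesis
        by (simp add: undef quot_map_def)
    qed
  qed
  ultimately show ?thesis
    by (rule that)
qed

(* Hom(A^2/S, A^2/T) consists of the matrices [P R] with [P R] S \<subseteq> T, modulo T \<times> T; a linear
   parametrisation of them with kernel K exhibits it as A^2/K. *)
lemma mod_iso_Hom_pair_quotI:
  assumes S: "pair.subspace S" and T: "pair.subspace T" and K: "pair.subspace K"
    and PI: "module_hom pair_scale pair_scale PI" and RI: "module_hom pair_scale pair_scale RI"
    and maps_into: "\<And>w. matrix_map (PI w) (RI w) ` S \<subseteq> T"
    and onto: "\<And>P R. matrix_map P R ` S \<subseteq> T \<Longrightarrow> \<exists>w. P - PI w \<in> T \<and> R - RI w \<in> T"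
    and kernel: "\<And>w. PI w \<in> T \<and> RI w \<in> T \<longleftrightarrow> w \<in> K"
  shows "mod_iso (pair_quot K) (Hom_mod (pair_quot S) (pair_quot T))"
proof -
  interpret PI: module_hom pair_scale pair_scale PI by (rule PI)
  interpret RI: module_hom pair_scale pair_scale RI by (rule RI)
  define g where "g w = quot_map S T (matrix_map (PI w) (RI w))" for w
  show ?thesis
  proof (rule pair.mod_iso_quot_modI[OF K])
    show "g (v + w) = madd (Hom_mod (pair_quot S) (pair_quot T)) (g v) (g w)" for v w
      by (simp add: g_def madd_Hom_quot_map[OF T] PI.add RI.add)
    show "g (pair_scale r v) = msmul (Hom_mod (pair_quot S) (pair_quot T)) r (g v)" for r v
      by (simp add: g_def msmul_Hom_quot_map[OF T] PI.scale RI.scale)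
    show "mcarrier (Hom_mod (pair_quot S) (pair_quot T)) = range g"
    proof
      show "mcarrier (Hom_mod (pair_quot S) (pair_quot T)) \<subseteq> range g"
      proof
        fix \<phi> assume "\<phi> \<in> mcarrier (Hom_mod (pair_quot S) (pair_quot T))"
        then obtain P R where PR: "matrix_map P R ` S \<subseteq> T"
          and \<phi>: "\<phi> = quot_map S T (matrix_map P R)"
          by (rule Hom_pair_quotE[OF S T])
        obtain w where "P - PI w \<in> T" "R - RI w \<in> T"
          using onto[OF PR] by blast
        then have "\<phi> = g w"
          by (simp add: \<phi> g_def quot_map_eq_iff[OF S T PR maps_into])
        then show "\<phi> \<in> range g" by blast
      qed
      show "range g \<subseteq> mcarrier (Hom_mod (pair_quot S) (pair_quot T))"
        using quot_map_in_Hom[OF S T maps_into] by (auto simp: g_def)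
    qed
    show "g v = g w \<longleftrightarrow> v - w \<in> K" for v w
      using kernel[of "v - w"]
      by (simp add: g_def quot_map_eq_iff[OF S T maps_into maps_into] PI.diff RI.diff)
  qed
qed

section \<open>The modules \<open>G\<^sub>c\<close> and \<open>H\<^sub>c\<close>\<close>

abbreviation im_gamma :: "'a::comm_ring_1 \<Rightarrow> 'a \<Rightarrow> 'a \<Rightarrow> ('a \<times> 'a) set" where
  "im_gamma x y c \<equiv> range (gamma_map x y c)"

lemma gamma_map_eq_matrix_map: "gamma_map x y c = matrix_map (x, 0) (c, y)"
  by (simp add: fun_eq_iff gamma_map_def matrix_map_def pair_scale_def algebra_simps)

lemma eta_map_eq_gamma_map: "eta_map x y c = gamma_map y x (- c)"
  by (simp add: eta_map_def gamma_map_def)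

lemma G_mod_eq: "G_mod x y c = pair_quot (im_gamma x y c)"
  by (simp add: G_mod_def free2_eq)

lemma H_mod_eq: "H_mod x y c = pair_quot (im_gamma y x (- c))"
  by (simp add: H_mod_def free2_eq eta_map_eq_gamma_map)

lemma mem_im_gamma: "p \<in> im_gamma x y c \<longleftrightarrow> (\<exists>s t. p = (x * s + c * t, y * t))"
  by (auto simp: gamma_map_def)

lemma subspace_im_gamma: "pair.subspace (im_gamma x y c)"
  by (simp add: gamma_map_eq_matrix_map subspace_range_matrix_map)

lemma matrix_map_image_im_gamma_subset_iff:
  assumes "pair.subspace T"
  shows "matrix_map P R ` im_gamma x y c \<subseteq> T
     \<longleftrightarrow> pair_scale x P \<in> T \<and> pair_scale c P + pair_scale y R \<in> T"
proof -
  have "matrix_map P R (x, 0) = pair_scale x P" "matrix_map P R (c, y) = pair_scale c P + pair_scale y R"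
    by (simp_all add: matrix_map_def)
  then show ?thesis
    by (simp add: gamma_map_eq_matrix_map matrix_map_image_range_subset_iff[OF assms])
qed

lemma mod_iso_pair_quot_im_gamma_uminus:
  "mod_iso (pair_quot (im_gamma x y c)) (pair_quot (im_gamma x y (- c)))"
proof -
  let ?T = "im_gamma x y (- c)"
  define flip where "flip p = (fst p, - snd p)" for p :: "'a \<times> 'a"
  have flip_mem: "flip p \<in> ?T \<longleftrightarrow> p \<in> im_gamma x y c" for p
  proof
    assume "flip p \<in> ?T"
    then obtain s t where "flip p = (x * s + (- c) * t, y * t)"
      by (auto simp: mem_im_gamma)
    then have "p = (x * s + c * (- t), y * (- t))"
      by (cases p) (simp add: flip_def, metis minus_minus)
    then show "p \<in> im_gamma x y c"
      unfolding mem_im_gamma by blast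
  next
    assume "p \<in> im_gamma x y c"
    then obtain s t where "p = (x * s + c * t, y * t)"
      by (auto simp: mem_im_gamma)
    then have "flip p = (x * s + (- c) * (- t), y * (- t))"
      by (simp add: flip_def)
    then show "flip p \<in> ?T"
      unfolding mem_im_gamma by blast
  qed
  show ?thesis
  proof (rule pair.mod_iso_quot_modI[OF subspace_im_gamma, where g = "\<lambda>p. coset ?T (flip p)"])
    show "coset ?T (flip (v + w)) = madd (pair_quot ?T) (coset ?T (flip v)) (coset ?T (flip w))" for v w
      by (simp add: pair.madd_quot_mod_coset[OF subspace_im_gamma] flip_def)
    show "coset ?T (flip (pair_scale r v)) = msmul (pair_quot ?T) r (coset ?T (flip v))" for r v
      by (simp add: pair.msmul_quot_mod_coset[OF subspace_im_gamma] flip_def pair_scale_def)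
    have "coset ?T p = coset ?T (flip (flip p))" for p
      by (simp add: flip_def)
    then show "mcarrier (pair_quot ?T) = range (\<lambda>p. coset ?T (flip p))"
      by (auto simp: pair.mcarrier_quot_mod)
    have "flip v - flip w = flip (v - w)" for v w
      by (simp add: flip_def)
    then show "coset ?T (flip v) = coset ?T (flip w) \<longleftrightarrow> v - w \<in> im_gamma x y c" for v w
      by (simp add: pair.coset_eq_iff[OF subspace_im_gamma] flip_mem)
  qed
qed

section \<open>Regular exact pairs of zero divisors\<close>

locale exact_pair_setting =
  fixes x y a :: "'a::comm_ring_1"
  assumes regular_exact_pair: "regular_exact_pair x y"
    and a_regular: "a * r \<in> ideal_span {x, y} \<Longrightarrow> r \<in> ideal_span {x, y}"
begin

lemma mult_x_eq_0_iff: "r * x = 0 \<longleftrightarrow> y dvd r"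
proof -
  have "r \<in> Ann x \<longleftrightarrow> r \<in> principal y"
    using regular_exact_pair by (simp add: regular_exact_pair_def exact_pair_def)
  then show ?thesis
    by (auto simp: Ann_def principal_def dvd_def mult.commute)
qed

lemma mult_y_eq_0_iff: "r * y = 0 \<longleftrightarrow> x dvd r"
proof -
  have "r \<in> Ann y \<longleftrightarrow> r \<in> principal x"
    using regular_exact_pair by (simp add: regular_exact_pair_def exact_pair_def)
  then show ?thesis
    by (auto simp: Ann_def principal_def dvd_def mult.commute)
qed

lemma dvd_both_eq_0: "x dvd r \<Longrightarrow> y dvd r \<Longrightarrow> r = 0"
  using regular_exact_pair
  by (auto simp: regular_exact_pair_def principal_def dvd_def mult.commute)

lemma x_mult_y: "x * y = 0"
  using mult_y_eq_0_iff by simp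

lemma cross_eq_dvd:
  assumes "x * \<alpha> = y * \<beta>"
  shows "y dvd \<alpha>" and "x dvd \<beta>"
proof -
  have "x * \<alpha> = 0"
    by (metis assms dvd_both_eq_0 dvd_triv_left)
  then show "y dvd \<alpha>"
    by (simp add: mult_x_eq_0_iff mult.commute)
  have "y * \<beta> = 0"
    using assms \<open>x * \<alpha> = 0\<close> by simp
  then show "x dvd \<beta>"
    by (simp add: mult_y_eq_0_iff mult.commute)
qed

lemma a_regular_explicit:
  assumes "a * r = x * m + y * n"
  obtains m' n' where "r = x * m' + y * n'"
  using a_regular[of r] assms by (auto simp: mem_ideal_span_pair)

lemma swap: "exact_pair_setting y x (- a)"
proof
  show "regular_exact_pair y x"
    using regular_exact_pair by (auto simp: regular_exact_pair_def exact_pair_def)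
  show "r \<in> ideal_span {y, x}" if "- a * r \<in> ideal_span {y, x}" for r
  proof -
    have "a * r \<in> ideal_span {x, y}"
      using that module.subspace_neg[OF module_mult subspace_ideal_span]
      by (fastforce simp: insert_commute)
    then show ?thesis
      by (simp add: a_regular insert_commute)
  qed
qed

lemma Pair_0_mem_im_gamma_iff: "(v, 0) \<in> im_gamma x y c \<longleftrightarrow> x dvd v"
proof
  assume "(v, 0) \<in> im_gamma x y c"
  then obtain s t where "v = x * s + c * t" and "t * y = 0"
    by (auto simp: mem_im_gamma mult.commute)
  moreover obtain k where "t = x * k"
    using \<open>t * y = 0\<close> by (auto simp: mult_y_eq_0_iff)
  ultimately have "v = x * (s + c * k)"
    by (simp add: algebra_simps)
  then show "x dvd v" ..
next
  assume "x dvd v"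
  then obtain k where "v = x * k" ..
  then have "(v, 0) = (x * k + c * 0, y * 0)"
    by simp
  then show "(v, 0) \<in> im_gamma x y c"
    unfolding mem_im_gamma by blast
qed

lemma zero_Pair_mem_im_gamma_iff: "(0, x * z) \<in> im_gamma x y c \<longleftrightarrow> y dvd z"
proof
  assume "(0, x * z) \<in> im_gamma x y c"
  then obtain t where "x * z = y * t"
    by (auto simp: mem_im_gamma)
  then show "y dvd z"
    by (rule cross_eq_dvd)
next
  assume "y dvd z"
  then have "(0, x * z) = (x * 0 + c * 0, y * 0)"
    by (auto simp: x_mult_y mult.assoc[symmetric])
  then show "(0, x * z) \<in> im_gamma x y c"
    unfolding mem_im_gamma by blast
qed

lemma Hom_G_ab_G_a_kernel:
  "(v, 0) \<in> im_gamma x y c \<and> (0, b * v + x * u) \<in> im_gamma x y c \<longleftrightarrow> (u, v) \<in> im_gamma y x (- b)"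
proof
  assume h: "(v, 0) \<in> im_gamma x y c \<and> (0, b * v + x * u) \<in> im_gamma x y c"
  then obtain k where v: "v = x * k"
    by (auto simp: Pair_0_mem_im_gamma_iff)
  have "b * v + x * u = x * (b * k + u)"
    by (simp add: v algebra_simps)
  then obtain l where l: "b * k + u = y * l"
    using h by (auto simp: zero_Pair_mem_im_gamma_iff)
  have "(u, v) = (y * l + (- b) * k, x * k)"
    using l by (simp add: v algebra_simps)
  then show "(u, v) \<in> im_gamma y x (- b)"
    unfolding mem_im_gamma by blast
next
  assume "(u, v) \<in> im_gamma y x (- b)"
  then obtain s t where u: "u = y * s - b * t" and v: "v = x * t"
    by (auto simp: mem_im_gamma)
  have "b * v + x * u = (x * y) * s"
    by (simp add: u v algebra_simps)
  then have "b * v + x * u = 0"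
    by (simp add: x_mult_y)
  then have "(0, b * v + x * u) \<in> im_gamma x y c"
    using pair.subspace_0[OF subspace_im_gamma] by (simp add: zero_prod_def)
  moreover have "(v, 0) \<in> im_gamma x y c"
    by (simp add: v Pair_0_mem_im_gamma_iff)
  ultimately show "(v, 0) \<in> im_gamma x y c \<and> (0, b * v + x * u) \<in> im_gamma x y c"
    by blast
qed

lemma Hom_G_a_G_ab_kernel:
  "(b * v - y * u, 0) \<in> im_gamma x y (c * b) \<and> (c * u, v) \<in> im_gamma x y (c * b)
     \<longleftrightarrow> (u, v) \<in> im_gamma x y b"
proof
  assume h: "(b * v - y * u, 0) \<in> im_gamma x y (c * b) \<and> (c * u, v) \<in> im_gamma x y (c * b)"
  then obtain t where v: "v = y * t"
    by (auto simp: mem_im_gamma)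
  have "x dvd y * (b * t - u)"
    using h by (simp add: Pair_0_mem_im_gamma_iff v algebra_simps)
  then have "(b * t - u) * y = 0"
    by (subst mult.commute) (intro dvd_both_eq_0, simp_all)
  then obtain l where l: "b * t - u = x * l"
    by (auto simp: mult_y_eq_0_iff)
  have "(u, v) = (x * (- l) + b * t, y * t)"
    using l by (simp add: v algebra_simps)
  then show "(u, v) \<in> im_gamma x y b"
    unfolding mem_im_gamma by blast
next
  assume "(u, v) \<in> im_gamma x y b"
  then obtain s t where u: "u = x * s + b * t" and v: "v = y * t"
    by (auto simp: mem_im_gamma)
  have "b * v - y * u = - (x * y) * s"
    by (simp add: u v algebra_simps)
  then have "(b * v - y * u, 0) \<in> im_gamma x y (c * b)"
    by (simp add: x_mult_y Pair_0_mem_im_gamma_iff)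
  moreover have "(c * u, v) = (x * (c * s) + (c * b) * t, y * t)"
    by (simp add: u v algebra_simps)
  then have "(c * u, v) \<in> im_gamma x y (c * b)"
    unfolding mem_im_gamma by blast
  ultimately show "(b * v - y * u, 0) \<in> im_gamma x y (c * b) \<and> (c * u, v) \<in> im_gamma x y (c * b)"
    by blast
qed

lemma scale_x_mem_im_gamma_dvd:
  assumes "pair_scale x P \<in> im_gamma x y c"
  shows "y dvd snd P"
proof -
  obtain t where "x * snd P = y * t"
    using assms by (auto simp: mem_im_gamma pair_scale_def)
  then show ?thesis
    by (rule cross_eq_dvd(1))
qed

lemma Hom_G_ab_G_a_onto:
  assumes xP: "pair_scale x P \<in> im_gamma x y a"
    and abPR: "pair_scale (a * b) P + pair_scale y R \<in> im_gamma x y a"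
  obtains u v where "P - (v, 0) \<in> im_gamma x y a" and "R - (0, b * v + x * u) \<in> im_gamma x y a"
proof -
  obtain p1 p2 where P: "P = (p1, p2)" by (cases P)
  obtain r1 r2 where R: "R = (r1, r2)" by (cases R)
  obtain k where k: "p2 = y * k"
    using scale_x_mem_im_gamma_dvd[OF xP] by (auto simp: P)
  obtain \<sigma> \<tau> where e1: "a * b * p1 + y * r1 = x * \<sigma> + a * \<tau>" and e2: "a * b * p2 + y * r2 = y * \<tau>"
    using abPR by (auto simp: P R mem_im_gamma)
  have "(a * b * k + r2 - \<tau>) * y = (a * b * p2 + y * r2) - y * \<tau>"
    by (simp add: k algebra_simps)
  then have "(a * b * k + r2 - \<tau>) * y = 0"
    by (simp add: e2)
  then obtain \<rho> where \<rho>: "a * b * k + r2 - \<tau> = x * \<rho>"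
    by (auto simp: mult_y_eq_0_iff)
  have "a * (b * p1 - a * b * k - r2) = (a * b * p1 + y * r1) - a * (a * b * k + r2 - \<tau>) - a * \<tau> - y * r1"
    by (simp add: algebra_simps)
  also have "\<dots> = (x * \<sigma> + a * \<tau>) - a * (x * \<rho>) - a * \<tau> - y * r1"
    by (simp only: e1 \<rho>)
  also have "\<dots> = x * (\<sigma> - a * \<rho>) + y * (- r1)"
    by (simp add: algebra_simps)
  finally have F: "a * (b * p1 - a * b * k - r2) = x * (\<sigma> - a * \<rho>) + y * (- r1)" .
  then obtain m n where mn: "b * p1 - a * b * k - r2 = x * m + y * n"
    by (rule a_regular_explicit)
  have "x * (\<sigma> - a * \<rho> - a * m) = (x * (\<sigma> - a * \<rho>) + y * (- r1)) - a * (x * m + y * n) + y * (a * n + r1)"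
    by (simp add: algebra_simps)
  also have "\<dots> = y * (a * n + r1)"
    by (simp only: F flip: mn) simp
  finally obtain w where w: "a * n + r1 = x * w"
    by (auto dest: cross_eq_dvd(2))
  show ?thesis
  proof (rule that)
    have "P - (p1 - a * k, 0) = (x * 0 + a * k, y * k)"
      by (simp add: P k)
    then show "P - (p1 - a * k, 0) \<in> im_gamma x y a"
      unfolding mem_im_gamma by blast
    have "r1 = x * w + a * (- n)"
      using w by (simp add: algebra_simps)
    moreover have "r2 = b * p1 - a * b * k - x * m - y * n"
      using mn by (simp add: algebra_simps)
    ultimately have "R - (0, b * (p1 - a * k) + x * (- m)) = (x * w + a * (- n), y * (- n))"
      by (simp add: R algebra_simps)
    then show "R - (0, b * (p1 - a * k) + x * (- m)) \<in> im_gamma x y a"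
      unfolding mem_im_gamma by blast
  qed
qed

lemma Hom_G_a_G_ab_onto:
  assumes xP: "pair_scale x P \<in> im_gamma x y (a * b)"
    and aPR: "pair_scale a P + pair_scale y R \<in> im_gamma x y (a * b)"
  obtains u v where "P - (b * v - y * u, 0) \<in> im_gamma x y (a * b)"
    and "R - (a * u, v) \<in> im_gamma x y (a * b)"
proof -
  obtain p1 p2 where P: "P = (p1, p2)" by (cases P)
  obtain r1 r2 where R: "R = (r1, r2)" by (cases R)
  obtain k where k: "p2 = y * k"
    using scale_x_mem_im_gamma_dvd[OF xP] by (auto simp: P)
  obtain \<sigma> \<tau> where e1: "a * p1 + y * r1 = x * \<sigma> + a * b * \<tau>" and e2: "a * p2 + y * r2 = y * \<tau>"
    using aPR by (auto simp: P R mem_im_gamma)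
  have "(a * k + r2 - \<tau>) * y = (a * p2 + y * r2) - y * \<tau>"
    by (simp add: k algebra_simps)
  then have "(a * k + r2 - \<tau>) * y = 0"
    by (simp add: e2)
  then obtain \<rho> where \<rho>: "a * k + r2 - \<tau> = x * \<rho>"
    by (auto simp: mult_y_eq_0_iff)
  have "a * (p1 - a * b * k - b * r2) = (a * p1 + y * r1) - a * b * (a * k + r2 - \<tau>) - a * b * \<tau> - y * r1"
    by (simp add: algebra_simps)
  also have "\<dots> = (x * \<sigma> + a * b * \<tau>) - a * b * (x * \<rho>) - a * b * \<tau> - y * r1"
    by (simp only: e1 \<rho>)
  also have "\<dots> = x * (\<sigma> - a * b * \<rho>) + y * (- r1)"
    by (simp add: algebra_simps)
  finally have F: "a * (p1 - a * b * k - b * r2) = x * (\<sigma> - a * b * \<rho>) + y * (- r1)" .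
  then obtain m n where mn: "p1 - a * b * k - b * r2 = x * m + y * n"
    by (rule a_regular_explicit)
  have "x * (\<sigma> - a * b * \<rho> - a * m) = (x * (\<sigma> - a * b * \<rho>) + y * (- r1)) - a * (x * m + y * n) + y * (a * n + r1)"
    by (simp add: algebra_simps)
  also have "\<dots> = y * (a * n + r1)"
    by (simp only: F flip: mn) simp
  finally obtain w where w: "a * n + r1 = x * w"
    by (auto dest: cross_eq_dvd(2))
  show ?thesis
  proof (rule that)
    have "p1 = x * m + (a * b) * k + b * r2 + y * n"
      using mn by (simp add: algebra_simps)
    then have "P - (b * r2 - y * (- n), 0) = (x * m + (a * b) * k, y * k)"
      by (simp add: P k)
    then show "P - (b * r2 - y * (- n), 0) \<in> im_gamma x y (a * b)"
      unfolding mem_im_gamma by blast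
    have "R - (a * (- n), r2) = (x * w + (a * b) * 0, y * 0)"
      using w by (simp add: R algebra_simps)
    then show "R - (a * (- n), r2) \<in> im_gamma x y (a * b)"
      unfolding mem_im_gamma by blast
  qed
qed

lemma mod_iso_Hom_G_ab_G_a:
  "mod_iso (pair_quot (im_gamma y x (- b)))
     (Hom_mod (pair_quot (im_gamma x y (a * b))) (pair_quot (im_gamma x y a)))"
proof (rule mod_iso_Hom_pair_quotI[OF subspace_im_gamma subspace_im_gamma subspace_im_gamma,
      where PI = "\<lambda>w. (snd w, 0)" and RI = "\<lambda>w. (0, b * snd w + x * fst w)"])
  show "module_hom pair_scale pair_scale (\<lambda>w. (snd w, 0))"
    by (simp add: module_hom_iff module_pair_scale pair_scale_def)
  show "module_hom pair_scale pair_scale (\<lambda>w. (0, b * snd w + x * fst w))"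
    by (simp add: module_hom_iff module_pair_scale pair_scale_def algebra_simps)
  show "matrix_map (snd w, 0) (0, b * snd w + x * fst w) ` im_gamma x y (a * b) \<subseteq> im_gamma x y a"
    for w
  proof -
    obtain u v where w: "w = (u, v)" by (cases w)
    have "y * (x * u) = 0"
      by (metis mult.assoc mult.commute mult_zero_left x_mult_y)
    then have "pair_scale (a * b) (v, 0) + pair_scale y (0, b * v + x * u) = (x * 0 + a * (b * v), y * (b * v))"
      by (simp add: algebra_simps)
    then have "pair_scale (a * b) (v, 0) + pair_scale y (0, b * v + x * u) \<in> im_gamma x y a"
      unfolding mem_im_gamma by blast
    then show ?thesis
      by (simp add: w matrix_map_image_im_gamma_subset_iff[OF subspace_im_gamma] Pair_0_mem_im_gamma_iff)
  qed
  show "\<exists>w. P - (snd w, 0) \<in> im_gamma x y a \<and> R - (0, b * snd w + x * fst w) \<in> im_gamma x y a"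
    if "matrix_map P R ` im_gamma x y (a * b) \<subseteq> im_gamma x y a" for P R
  proof -
    from that have "pair_scale x P \<in> im_gamma x y a"
      and "pair_scale (a * b) P + pair_scale y R \<in> im_gamma x y a"
      by (simp_all add: matrix_map_image_im_gamma_subset_iff[OF subspace_im_gamma])
    then obtain u v where "P - (v, 0) \<in> im_gamma x y a" "R - (0, b * v + x * u) \<in> im_gamma x y a"
      by (rule Hom_G_ab_G_a_onto)
    then show ?thesis
      by (intro exI[of _ "(u, v)"]) simp
  qed
  show "(snd w, 0) \<in> im_gamma x y a \<and> (0, b * snd w + x * fst w) \<in> im_gamma x y a
      \<longleftrightarrow> w \<in> im_gamma y x (- b)" for w
    using Hom_G_ab_G_a_kernel[of "snd w" a b "fst w"] by simp
qed

lemma mod_iso_Hom_G_a_G_ab: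
  "mod_iso (pair_quot (im_gamma x y b))
     (Hom_mod (pair_quot (im_gamma x y a)) (pair_quot (im_gamma x y (a * b))))"
proof (rule mod_iso_Hom_pair_quotI[OF subspace_im_gamma subspace_im_gamma subspace_im_gamma,
      where PI = "\<lambda>w. (b * snd w - y * fst w, 0)" and RI = "\<lambda>w. (a * fst w, snd w)"])
  show "module_hom pair_scale pair_scale (\<lambda>w. (b * snd w - y * fst w, 0))"
    by (simp add: module_hom_iff module_pair_scale pair_scale_def algebra_simps)
  show "module_hom pair_scale pair_scale (\<lambda>w. (a * fst w, snd w))"
    by (simp add: module_hom_iff module_pair_scale pair_scale_def algebra_simps)
  show "matrix_map (b * snd w - y * fst w, 0) (a * fst w, snd w) ` im_gamma x y a
      \<subseteq> im_gamma x y (a * b)" for w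
  proof -
    obtain u v where w: "w = (u, v)" by (cases w)
    have "pair_scale a (b * v - y * u, 0) + pair_scale y (a * u, v) = (x * 0 + (a * b) * v, y * v)"
      by (simp add: algebra_simps)
    then have "pair_scale a (b * v - y * u, 0) + pair_scale y (a * u, v) \<in> im_gamma x y (a * b)"
      unfolding mem_im_gamma by blast
    then show ?thesis
      by (simp add: w matrix_map_image_im_gamma_subset_iff[OF subspace_im_gamma] Pair_0_mem_im_gamma_iff)
  qed
  show "\<exists>w. P - (b * snd w - y * fst w, 0) \<in> im_gamma x y (a * b)
      \<and> R - (a * fst w, snd w) \<in> im_gamma x y (a * b)"
    if "matrix_map P R ` im_gamma x y a \<subseteq> im_gamma x y (a * b)" for P R
  proof -
    from that have "pair_scale x P \<in> im_gamma x y (a * b)"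
      and "pair_scale a P + pair_scale y R \<in> im_gamma x y (a * b)"
      by (simp_all add: matrix_map_image_im_gamma_subset_iff[OF subspace_im_gamma])
    then obtain u v where "P - (b * v - y * u, 0) \<in> im_gamma x y (a * b)"
      and "R - (a * u, v) \<in> im_gamma x y (a * b)"
      by (rule Hom_G_a_G_ab_onto)
    then show ?thesis
      by (intro exI[of _ "(u, v)"]) simp
  qed
  show "(b * snd w - y * fst w, 0) \<in> im_gamma x y (a * b) \<and> (a * fst w, snd w) \<in> im_gamma x y (a * b)
      \<longleftrightarrow> w \<in> im_gamma x y b" for w
    using Hom_G_a_G_ab_kernel[of b "snd w" "fst w" a] by simp
qed

end

theorem theorem7p7:
  fixes x y a b :: "'a::comm_ring_1"
  assumes "noetherian_ring TYPE('a)"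
    and "local_ring TYPE('a)"
    and "regular_exact_pair x y"
    and "weakly_regular a (quot_xy x y)"
  shows "mod_iso (Hom_mod (H_mod x y a) (H_mod x y (a * b))) (Hom_mod (G_mod x y (a * b)) (G_mod x y a))
       \<and> mod_iso (Hom_mod (G_mod x y (a * b)) (G_mod x y a)) (H_mod x y b)
       \<and> mod_iso (Hom_mod (G_mod x y a) (G_mod x y (a * b))) (Hom_mod (H_mod x y (a * b)) (H_mod x y a))
       \<and> mod_iso (Hom_mod (H_mod x y (a * b)) (H_mod x y a)) (G_mod x y b)"
proof -
  interpret xy: exact_pair_setting x y a
    using assms(3) weakly_regular_quot_xyD[OF assms(4)] by unfold_locales
  interpret yx: exact_pair_setting y x "- a"
    by (rule xy.swap)
  note to_quot = pair.mod_iso_quot_mod_sym[OF subspace_im_gamma]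
  note sign = mod_iso_pair_quot_im_gamma_uminus
  have I_yx: "mod_iso (pair_quot (im_gamma x y (- b)))
      (Hom_mod (pair_quot (im_gamma y x (- (a * b)))) (pair_quot (im_gamma y x (- a))))"
    using yx.mod_iso_Hom_G_ab_G_a by simp
  have II_yx: "mod_iso (pair_quot (im_gamma y x b))
      (Hom_mod (pair_quot (im_gamma y x (- a))) (pair_quot (im_gamma y x (- (a * b)))))"
    using yx.mod_iso_Hom_G_a_G_ab by simp
  show ?thesis
    unfolding G_mod_eq H_mod_eq
    using mod_iso_trans[OF mod_iso_trans[OF to_quot[OF II_yx] sign] xy.mod_iso_Hom_G_ab_G_a]
      to_quot[OF xy.mod_iso_Hom_G_ab_G_a]
      mod_iso_trans[OF mod_iso_trans[OF to_quot[OF xy.mod_iso_Hom_G_a_G_ab] sign] I_yx]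
      mod_iso_trans[OF to_quot[OF I_yx] to_quot[OF sign[of x y b]]]
    by blast
qed

end
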